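(* Assume in addition that $f_i'(u)+1\neq 0$ for all $u\in\mathbb R$ and all $1\le i\le k$. Then $\mathcal M_F$ is $0$-modeled on $\mathcal V=(\mathbb R^{3k+2},(\cdot,\cdot),R)$: for every point $P\in\mathbb R^{3k+2}$ there is a linear isometry $\Phi_P:(T_P\mathbb R^{3k+2},g_F|_P)\to(\mathbb R^{3k+2},(\cdot,\cdot))$ with $\Phi_P^*R=R_P$, where $R_P$ is the curvature tensor of $g_F$ at $P$. Equivalently, every tangent space $T_P\mathcal M_F$ admits a normalized basis with respect to $g_F|_P$ and $R_P$. In particular $\mathcal M_F$ is $0$-curvature homogeneous.
   Context: Fix an integer $k\ge 1$ and signs $\varepsilon_1,\dots,\varepsilon_k\in\{\pm1\}$. Let $f_1,\dots,f_k:\mathbb R\to\mathbb R$ be smooth functions and $F=(f_1,\dots,f_k)$. On $\mathbb R^{3k+2}$ with coordinates $(u_0,\dots,u_k,v_0,\dots,v_k,s_1,\dots,s_k)$ let $g_F$ be the symmetric metric whose only nonzero components on coordinate vector fields are (up to symmetry), for $1\le i\le k$ and $0\le i',j\le k$: $g_F(\partial_{u_0},\partial_{u_i})=2f_i(u_i)s_i$, $g_F(\partial_{u_i},\partial_{u_i})=-2u_0s_i$, $g_F(\partial_{u_{i'}},\partial_{v_j})=\delta_{i'j}$, $g_F(\partial_{s_i},\partial_{s_i})=\varepsilon_i$. Write $\mathcal M_F=(\mathbb R^{3k+2},g_F)$, $\nabla$ for its Levi-Civita connection and $R(X,Y,Z,W)=g_F(\nabla_X\nabla_YZ-\nabla_Y\nabla_XZ-\nabla_{[X,Y]}Z,W)$.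 Model: let $V=\mathbb R^{3k+2}$ with basis $\{U_0,\dots,U_k,V_0,\dots,V_k,S_1,\dots,S_k\}$, let $(\cdot,\cdot)$ be the symmetric inner product whose only nonzero values on pairs of basis vectors are $(U_i,V_i)=(V_i,U_i)=1$ for $0\le i\le k$ and $(S_i,S_i)=\varepsilon_i$ for $1\le i\le k$, and let $R$ be the algebraic curvature tensor on $V$ (a 4-linear form with $R(x,y,z,w)=-R(y,x,z,w)=R(z,w,x,y)$ and $R(x,y,z,w)+R(y,z,x,w)+R(z,x,y,w)=0$) whose only nonzero values on 4-tuples of basis vectors are those obtained from $R(U_0,U_i,U_i,S_i)=1$ ($1\le i\le k$) by these symmetries. Set $\mathcal V=(V,(\cdot,\cdot),R)$. Given a vector space $W$ with a symmetric bilinear form $\langle\cdot,\cdot\rangle$ and a 4-tensor $T$, a normalized basis of $(W,\langle\cdot,\cdot\rangle,T)$ is a basis $\{U_0',\dots,U_k',V_0',\dots,V_k',S_1',\dots,S_k'\}$ on which $\langle\cdot,\cdot\rangle$ and $T$ take exactly the values just described for $(\cdot,\cdot)$ and $R$ on the standard basis. *)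

theory Defs
  imports "HOL-Analysis.Analysis"
begin

text \<open>Points of and tangent vectors at R^N (N = 3k+2) are represented
  as functions nat => real, only the components with index < N being relevant.
  Coordinate indices: u_i is index i (0 <= i <= k), v_j is index k+1+j (0 <= j <= k),
  s_i is index 2k+1+i (1 <= i <= k).  The same index layout is used for the basis
  U_0..U_k, V_0..V_k, S_1..S_k of the model space.\<close>

definition smooth_fun :: "(real \<Rightarrow> real) \<Rightarrow> bool" where
  "smooth_fun f \<longleftrightarrow> (\<forall>m x. ((deriv ^^ m) f) differentiable (at x))"

definition pd :: "((nat \<Rightarrow> real) \<Rightarrow> real) \<Rightarrow> nat \<Rightarrow> (nat \<Rightarrow> real) \<Rightarrow> real" where
  "pd h a x = deriv (\<lambda>t. h (x(a := t))) (x a)"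

definition gF :: "nat \<Rightarrow> (nat \<Rightarrow> real) \<Rightarrow> (nat \<Rightarrow> real \<Rightarrow> real)
                  \<Rightarrow> (nat \<Rightarrow> real) \<Rightarrow> nat \<Rightarrow> nat \<Rightarrow> real" where
  "gF k eps F x a b =
     (if a = 0 \<and> 1 \<le> b \<and> b \<le> k then 2 * F b (x b) * x (2*k+1+b)
      else if b = 0 \<and> 1 \<le> a \<and> a \<le> k then 2 * F a (x a) * x (2*k+1+a)
      else if a = b \<and> 1 \<le> a \<and> a \<le> k then - 2 * x 0 * x (2*k+1+a)
      else if a \<le> k \<and> b = a + k + 1 then 1
      else if b \<le> k \<and> a = b + k + 1 then 1
      else if a = b \<and> 2*k+2 \<le> a \<and> a < 3*k+2 then eps (a - (2*k+1))
      else 0)"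

definition Gamma1 :: "((nat \<Rightarrow> real) \<Rightarrow> nat \<Rightarrow> nat \<Rightarrow> real) \<Rightarrow> nat \<Rightarrow> nat \<Rightarrow> nat
                      \<Rightarrow> (nat \<Rightarrow> real) \<Rightarrow> real" where
  "Gamma1 g a b c x =
     (pd (\<lambda>y. g y b c) a x + pd (\<lambda>y. g y a c) b x - pd (\<lambda>y. g y a b) c x) / 2"

definition Gamma2 :: "((nat \<Rightarrow> real) \<Rightarrow> nat \<Rightarrow> nat \<Rightarrow> real) \<Rightarrow> nat \<Rightarrow> (nat \<Rightarrow> real)
                      \<Rightarrow> nat \<Rightarrow> nat \<Rightarrow> nat \<Rightarrow> real" where
  "Gamma2 g n x a b = (THE C. (\<forall>e\<ge>n. C e = 0) \<and>
        (\<forall>d<n. (\<Sum>e<n. C e * g x e d) = Gamma1 g a b d x))"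

text \<open>R(partial_a, partial_b, partial_c, partial_d) at x, with
  R(X,Y,Z,W) = g(nabla_X nabla_Y Z - nabla_Y nabla_X Z - nabla_[X,Y] Z, W)
  (coordinate fields commute).\<close>
definition curv :: "((nat \<Rightarrow> real) \<Rightarrow> nat \<Rightarrow> nat \<Rightarrow> real) \<Rightarrow> nat
                    \<Rightarrow> (nat \<Rightarrow> real) \<Rightarrow> nat \<Rightarrow> nat \<Rightarrow> nat \<Rightarrow> nat \<Rightarrow> real" where
  "curv g n x a b c d =
     (\<Sum>e<n. pd (\<lambda>y. Gamma2 g n y b c e) a x * g x e d
             + Gamma2 g n x b c e * Gamma1 g a e d x)
   - (\<Sum>e<n. pd (\<lambda>y. Gamma2 g n y a c e) b x * g x e d
             + Gamma2 g n x a c e * Gamma1 g b e d x)"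

definition model_ip :: "nat \<Rightarrow> (nat \<Rightarrow> real) \<Rightarrow> nat \<Rightarrow> nat \<Rightarrow> real" where
  "model_ip k eps a b =
     (if (a \<le> k \<and> b = a + k + 1) \<or> (b \<le> k \<and> a = b + k + 1) then 1
      else if a = b \<and> 2*k+2 \<le> a \<and> a < 3*k+2 then eps (a - (2*k+1))
      else 0)"

text \<open>Model curvature tensor on basis indices: the orbit of R(U_0,U_i,U_i,S_i) = 1
  under the symmetries of an algebraic curvature tensor; all other values 0.\<close>
definition model_R :: "nat \<Rightarrow> nat \<Rightarrow> nat \<Rightarrow> nat \<Rightarrow> nat \<Rightarrow> real" where
  "model_R k a b c d = (\<Sum>i\<in>{1..k}.
     (let s = 2*k+1+i in
       (if (a,b,c,d) = (0,i,i,s) then 1 else 0)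
     + (if (a,b,c,d) = (i,0,i,s) then -1 else 0)
     + (if (a,b,c,d) = (0,i,s,i) then -1 else 0)
     + (if (a,b,c,d) = (i,0,s,i) then 1 else 0)
     + (if (a,b,c,d) = (i,s,0,i) then 1 else 0)
     + (if (a,b,c,d) = (s,i,0,i) then -1 else 0)
     + (if (a,b,c,d) = (i,s,i,0) then -1 else 0)
     + (if (a,b,c,d) = (s,i,i,0) then 1 else 0)))"

definition bil :: "nat \<Rightarrow> (nat \<Rightarrow> nat \<Rightarrow> real) \<Rightarrow> (nat \<Rightarrow> real) \<Rightarrow> (nat \<Rightarrow> real) \<Rightarrow> real" where
  "bil n B v w = (\<Sum>a<n. \<Sum>b<n. B a b * v a * w b)"

definition quad4 :: "nat \<Rightarrow> (nat \<Rightarrow> nat \<Rightarrow> nat \<Rightarrow> nat \<Rightarrow> real)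
                     \<Rightarrow> (nat \<Rightarrow> real) \<Rightarrow> (nat \<Rightarrow> real) \<Rightarrow> (nat \<Rightarrow> real) \<Rightarrow> (nat \<Rightarrow> real) \<Rightarrow> real" where
  "quad4 n T v1 v2 v3 v4 =
     (\<Sum>a<n. \<Sum>b<n. \<Sum>c<n. \<Sum>d<n. T a b c d * v1 a * v2 b * v3 c * v4 d)"

definition mv :: "nat \<Rightarrow> (nat \<Rightarrow> nat \<Rightarrow> real) \<Rightarrow> (nat \<Rightarrow> real) \<Rightarrow> nat \<Rightarrow> real" where
  "mv n M v = (\<lambda>a. \<Sum>b<n. M a b * v b)"

definition invertible_mat :: "nat \<Rightarrow> (nat \<Rightarrow> nat \<Rightarrow> real) \<Rightarrow> bool" where
  "invertible_mat n M \<longleftrightarrow> (\<exists>N. \<forall>a<n. \<forall>b<n.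
      (\<Sum>c<n. M a c * N c b) = (if a = b then 1 else 0) \<and>
      (\<Sum>c<n. N a c * M c b) = (if a = b then 1 else 0))"

definition lin_indep_basis :: "nat \<Rightarrow> (nat \<Rightarrow> nat \<Rightarrow> real) \<Rightarrow> bool" where
  "lin_indep_basis n Bv \<longleftrightarrow>
     (\<forall>c. (\<forall>a<n. (\<Sum>j<n. c j * Bv j a) = 0) \<longrightarrow> (\<forall>j<n. c j = 0))"

end

theory Submission
  imports Defs
begin

text \<open>
  Besides the flat model inner product, \<open>g_F\<close> has only the coefficients \<open>2 f_i(u_i) s_i\<close> of
  \<open>du_0 du_i\<close> and \<open>-2 u_0 s_i\<close> of \<open>du_i\<^sup>2\<close>. Nothing depends on the \<open>v_j\<close> and the rows
  \<open>g(\<partial>v_j, \<cdot>) = du_j\<close>, \<open>g(\<partial>s_i, \<cdot>) = \<epsilon>_i ds_i\<close> are constant, so the Christoffel symbols of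
  the first kind vanish as soon as one index is a \<open>v_j\<close>, and raising their index does not depend
  on the point. With \<open>A_i = du_0 \<and> du_i\<close>, \<open>B_i = du_i \<and> ds_i\<close> and \<open>c_i = 1 + f_i'(u_i)\<close> the
  curvature tensor comes out as
  \<open>R_P = \<Sum>_i c_i (A_i \<otimes> B_i + B_i \<otimes> A_i) - \<epsilon>_i f_i(u_i)\<^sup>2 A_i \<otimes> A_i\<close>.
  As \<open>c_i \<noteq> 0\<close>, rescaling \<open>du_i\<close> by \<open>\<surd>|c_i|\<close> and shearing \<open>ds_i\<close> along \<open>du_0\<close> turns the model
  tensor \<open>\<Sum>_i (A_i \<otimes> B_i + B_i \<otimes> A_i)\<close> into \<open>R_P\<close>, and correcting the \<open>dv_j\<close> makes this
  change of coframe an isometry onto the model inner product. Composing two such frames gives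
  curvature homogeneity.
\<close>

definition kdelta :: "nat \<Rightarrow> nat \<Rightarrow> real" where
  "kdelta p a = (if a = p then 1 else 0)"

lemma kdelta_commute: "kdelta p a = kdelta a p"
  by (simp add: kdelta_def)

lemma sum_kdelta_mult:
  "finite A \<Longrightarrow> (\<Sum>a\<in>A. kdelta p a * f a) = (if p \<in> A then f p else 0)"
  by (simp add: kdelta_def if_distrib[where f="\<lambda>x. x * _"] cong: if_cong)

lemma sum_kdelta_mult':
  "finite A \<Longrightarrow> (\<Sum>a\<in>A. kdelta a p * f a) = (if p \<in> A then f p else 0)"
  by (simp add: kdelta_commute[of _ p] sum_kdelta_mult)

lemma sum_mult_kdelta:
  "finite A \<Longrightarrow> (\<Sum>a\<in>A. f a * kdelta p a) = (if p \<in> A then f p else 0)"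
  by (simp add: mult.commute[of _ "kdelta p _"] sum_kdelta_mult)

definition sym_kdelta :: "nat \<Rightarrow> nat \<Rightarrow> nat \<Rightarrow> nat \<Rightarrow> real" where
  "sym_kdelta p q a b = kdelta p a * kdelta q b + kdelta q a * kdelta p b"

definition wedge_kdelta :: "nat \<Rightarrow> nat \<Rightarrow> nat \<Rightarrow> nat \<Rightarrow> real" where
  "wedge_kdelta p q a b = kdelta p a * kdelta q b - kdelta q a * kdelta p b"

lemma if_tuple_eq_kdelta:
  "(if (a, b, c, d) = (p, q, r, t) then z else 0)
     = z * (kdelta p a * kdelta q b * kdelta r c * kdelta t d)"
  by (simp add: kdelta_def)

lemma bil_add: "bil n (\<lambda>a b. X a b + Y a b) v w = bil n X v w + bil n Y v w"
  unfolding bil_def distrib_right sum.distrib ..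

lemma bil_diff: "bil n (\<lambda>a b. X a b - Y a b) v w = bil n X v w - bil n Y v w"
  unfolding bil_def left_diff_distrib sum_subtractf ..

lemma bil_cmult: "bil n (\<lambda>a b. c * X a b) v w = c * bil n X v w"
  unfolding bil_def mult.assoc sum_distrib_left ..

lemma bil_sum:
  "finite S \<Longrightarrow> bil n (\<lambda>a b. \<Sum>i\<in>S. X i a b) v w = (\<Sum>i\<in>S. bil n (X i) v w)"
  unfolding bil_def sum_distrib_right by (subst sum.swap, subst (2) sum.swap) simp

lemma bil_kdelta:
  assumes "p < n" "q < n"
  shows "bil n (\<lambda>a b. kdelta p a * kdelta q b) v w = v p * w q"
proof -
  have "bil n (\<lambda>a b. kdelta p a * kdelta q b) v w
      = (\<Sum>a<n. kdelta p a * (v a * (\<Sum>b<n. kdelta q b * w b)))"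
    unfolding bil_def by (simp add: sum_distrib_left algebra_simps)
  then show ?thesis using assms by (simp add: sum_kdelta_mult)
qed

lemma bil_basis:
  assumes "a < n" "b < n"
  shows "bil n B (kdelta a) (kdelta b) = B a b"
proof -
  have "bil n B (kdelta a) (kdelta b) = (\<Sum>x<n. kdelta a x * (\<Sum>y<n. B x y * kdelta b y))"
    unfolding bil_def by (simp add: sum_distrib_left algebra_simps)
  then show ?thesis using assms by (simp add: sum_kdelta_mult sum_mult_kdelta)
qed

lemma bil_cong:
  assumes "\<And>x. x < n \<Longrightarrow> v x = v' x" "\<And>x. x < n \<Longrightarrow> w x = w' x"
  shows "bil n B v w = bil n B v' w'"
  unfolding bil_def using assms by (intro sum.cong) auto

lemma quad4_add:
  "quad4 n (\<lambda>a b c d. X a b c d + Y a b c d) v1 v2 v3 v4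
     = quad4 n X v1 v2 v3 v4 + quad4 n Y v1 v2 v3 v4"
  unfolding quad4_def distrib_right sum.distrib ..

lemma quad4_cmult: "quad4 n (\<lambda>a b c d. r * X a b c d) v1 v2 v3 v4 = r * quad4 n X v1 v2 v3 v4"
  unfolding quad4_def mult.assoc sum_distrib_left ..

lemma quad4_sum:
  "finite S \<Longrightarrow> quad4 n (\<lambda>a b c d. \<Sum>i\<in>S. X i a b c d) v1 v2 v3 v4 = (\<Sum>i\<in>S. quad4 n (X i) v1 v2 v3 v4)"
  by (induction S rule: finite_induct) (simp_all add: quad4_add, simp add: quad4_def)

lemma quad4_tensor:
  "quad4 n (\<lambda>a b c d. X a b * Y c d) v1 v2 v3 v4 = bil n X v1 v2 * bil n Y v3 v4"
proof -
  have "bil n X v1 v2 * bil n Y v3 v4 = (\<Sum>a<n. \<Sum>b<n. X a b * v1 a * v2 b * bil n Y v3 v4)"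
    unfolding bil_def[of n X] sum_distrib_right ..
  also have "\<dots> = quad4 n (\<lambda>a b c d. X a b * Y c d) v1 v2 v3 v4"
    unfolding quad4_def bil_def sum_distrib_left by (intro sum.cong refl) (simp add: algebra_simps)
  finally show ?thesis by simp
qed

lemma quad4_basis:
  assumes "a < n" "b < n" "c < n" "d < n"
  shows "quad4 n T (kdelta a) (kdelta b) (kdelta c) (kdelta d) = T a b c d"
proof -
  have "quad4 n T (kdelta a) (kdelta b) (kdelta c) (kdelta d) =
    (\<Sum>x<n. kdelta a x * (\<Sum>y<n. kdelta b y * (\<Sum>z<n. kdelta c z * (\<Sum>u<n. T x y z u * kdelta d u))))"
    unfolding quad4_def by (simp add: sum_distrib_left algebra_simps)
  then show ?thesis using assms by (simp add: sum_kdelta_mult sum_mult_kdelta)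
qed

lemma quad4_cong:
  assumes "\<And>x. x < n \<Longrightarrow> v1 x = v1' x" "\<And>x. x < n \<Longrightarrow> v2 x = v2' x"
    "\<And>x. x < n \<Longrightarrow> v3 x = v3' x" "\<And>x. x < n \<Longrightarrow> v4 x = v4' x"
  shows "quad4 n T v1 v2 v3 v4 = quad4 n T v1' v2' v3' v4'"
  unfolding quad4_def using assms by (intro sum.cong) auto

lemma quad4_cong_tensor:
  assumes "\<And>a b c d. a < n \<Longrightarrow> b < n \<Longrightarrow> c < n \<Longrightarrow> d < n \<Longrightarrow> T a b c d = T' a b c d"
  shows "quad4 n T v1 v2 v3 v4 = quad4 n T' v1 v2 v3 v4"
  unfolding quad4_def using assms by (intro sum.cong) auto

definition wedge :: "nat \<Rightarrow> nat \<Rightarrow> (nat \<Rightarrow> real) \<Rightarrow> (nat \<Rightarrow> real) \<Rightarrow> real" where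
  "wedge p q v w = v p * w q - v q * w p"

lemma bil_sym_kdelta: "p < n \<Longrightarrow> q < n \<Longrightarrow> bil n (sym_kdelta p q) v w = v p * w q + v q * w p"
  unfolding sym_kdelta_def by (simp add: bil_add bil_kdelta)

lemma bil_wedge_kdelta: "p < n \<Longrightarrow> q < n \<Longrightarrow> bil n (wedge_kdelta p q) v w = wedge p q v w"
  unfolding wedge_kdelta_def wedge_def by (simp add: bil_diff bil_kdelta)

section \<open>Linear maps of \<open>R^n\<close> in components\<close>

text \<open>Vectors of \<open>R^n\<close> are functions \<open>nat \<Rightarrow> real\<close> of which only the components below \<open>n\<close> matter,
  so a linear map must also depend only on those components of its argument.\<close>
definition linear_on :: "nat \<Rightarrow> ((nat \<Rightarrow> real) \<Rightarrow> nat \<Rightarrow> real) \<Rightarrow> bool" where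
  "linear_on n f \<longleftrightarrow>
     (\<forall>u v. \<forall>a<n. f (\<lambda>x. u x + v x) a = f u a + f v a) \<and>
     (\<forall>c u. \<forall>a<n. f (\<lambda>x. c * u x) a = c * f u a) \<and>
     (\<forall>u v. (\<forall>x<n. u x = v x) \<longrightarrow> (\<forall>a<n. f u a = f v a))"

definition inverse_maps_on ::
    "nat \<Rightarrow> ((nat \<Rightarrow> real) \<Rightarrow> nat \<Rightarrow> real) \<Rightarrow> ((nat \<Rightarrow> real) \<Rightarrow> nat \<Rightarrow> real) \<Rightarrow> bool" where
  "inverse_maps_on n f g \<longleftrightarrow> (\<forall>v. \<forall>a<n. f (g v) a = v a) \<and> (\<forall>v. \<forall>a<n. g (f v) a = v a)"

definition matrix_of :: "((nat \<Rightarrow> real) \<Rightarrow> nat \<Rightarrow> real) \<Rightarrow> nat \<Rightarrow> nat \<Rightarrow> real" where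
  "matrix_of f a b = f (kdelta b) a"

lemma linear_onI:
  assumes "\<And>u v a. a < n \<Longrightarrow> f (\<lambda>x. u x + v x) a = f u a + f v a"
    and "\<And>c u a. a < n \<Longrightarrow> f (\<lambda>x. c * u x) a = c * f u a"
    and "\<And>u v a. (\<And>x. x < n \<Longrightarrow> u x = v x) \<Longrightarrow> a < n \<Longrightarrow> f u a = f v a"
  shows "linear_on n f"
  unfolding linear_on_def using assms by blast

lemma linear_on_cong:
  "linear_on n f \<Longrightarrow> (\<And>x. x < n \<Longrightarrow> u x = v x) \<Longrightarrow> a < n \<Longrightarrow> f u a = f v a"
  unfolding linear_on_def by blast

lemma linear_on_sum:
  assumes f: "linear_on n f" and "finite S" and a: "a < n"
  shows "f (\<lambda>x. \<Sum>b\<in>S. c b * u b x) a = (\<Sum>b\<in>S. c b * f (u b) a)"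
  using \<open>finite S\<close>
proof (induction S rule: finite_induct)
  case empty
  have "f (\<lambda>x. 0 * u x) a = 0 * f u a" for u
    using f a unfolding linear_on_def by blast
  then show ?case by simp
next
  case (insert b S)
  then show ?case
    using f a unfolding linear_on_def by simp
qed

lemma linear_on_comp:
  assumes f: "linear_on n f" and g: "linear_on n g"
  shows "linear_on n (\<lambda>v. f (g v))"
proof (rule linear_onI)
  fix u v :: "nat \<Rightarrow> real" and c a assume a: "a < n"
  have "f (g (\<lambda>x. u x + v x)) a = f (\<lambda>x. g u x + g v x) a"
    using g by (intro linear_on_cong[OF f _ a]) (simp add: linear_on_def)
  then show "f (g (\<lambda>x. u x + v x)) a = f (g u) a + f (g v) a"
    using f a by (simp add: linear_on_def)
  have "f (g (\<lambda>x. c * u x)) a = f (\<lambda>x. c * g u x) a"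
    using g by (intro linear_on_cong[OF f _ a]) (simp add: linear_on_def)
  then show "f (g (\<lambda>x. c * u x)) a = c * f (g u) a"
    using f a by (simp add: linear_on_def)
next
  fix u v :: "nat \<Rightarrow> real" and a assume "\<And>x. x < n \<Longrightarrow> u x = v x" "a < n"
  then show "f (g u) a = f (g v) a"
    by (intro linear_on_cong[OF f _ \<open>a < n\<close>] linear_on_cong[OF g])
qed

lemma mv_matrix_of:
  assumes f: "linear_on n f" and a: "a < n"
  shows "mv n (matrix_of f) v a = f v a"
proof -
  have "mv n (matrix_of f) v a = f (\<lambda>x. \<Sum>b<n. v b * kdelta b x) a"
    unfolding mv_def matrix_of_def by (simp add: linear_on_sum[OF f _ a] mult.commute)
  also have "\<dots> = f v a"
    by (rule linear_on_cong[OF f _ a]) (simp add: sum_mult_kdelta kdelta_commute[of _ "x" for x])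
  finally show ?thesis .
qed

lemma inverse_maps_on_sym: "inverse_maps_on n f g \<Longrightarrow> inverse_maps_on n g f"
  unfolding inverse_maps_on_def by blast

lemma inverse_maps_on_comp:
  assumes fg: "inverse_maps_on n f g" and fg': "inverse_maps_on n f' g'"
    and f': "linear_on n f'" and g: "linear_on n g"
  shows "inverse_maps_on n (\<lambda>v. f' (f v)) (\<lambda>v. g (g' v))"
  unfolding inverse_maps_on_def
proof (intro conjI allI impI)
  fix v :: "nat \<Rightarrow> real" and a assume a: "a < n"
  have "f' (f (g (g' v))) a = f' (g' v) a"
    using fg by (intro linear_on_cong[OF f' _ a]) (simp add: inverse_maps_on_def)
  then show "f' (f (g (g' v))) a = v a"
    using fg' a by (simp add: inverse_maps_on_def)
  have "g (g' (f' (f v))) a = g (f v) a"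
    using fg' by (intro linear_on_cong[OF g _ a]) (simp add: inverse_maps_on_def)
  then show "g (g' (f' (f v))) a = v a"
    using fg a by (simp add: inverse_maps_on_def)
qed

lemma invertible_mat_matrix_of:
  assumes "inverse_maps_on n f g" "linear_on n f" "linear_on n g"
  shows "invertible_mat n (matrix_of f)"
  unfolding invertible_mat_def
proof (intro exI[of _ "matrix_of g"] allI impI conjI)
  fix a b assume a: "a < n" and b: "b < n"
  show "(\<Sum>c<n. matrix_of f a c * matrix_of g c b) = (if a = b then 1 else 0)"
    using mv_matrix_of[OF assms(2) a, of "g (kdelta b)"] assms(1) a
    by (simp add: mv_def matrix_of_def inverse_maps_on_def kdelta_def)
  show "(\<Sum>c<n. matrix_of g a c * matrix_of f c b) = (if a = b then 1 else 0)"
    using mv_matrix_of[OF assms(3) a, of "f (kdelta b)"] assms(1) a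
    by (simp add: mv_def matrix_of_def inverse_maps_on_def kdelta_def)
qed

lemma lin_indep_basis_columns:
  assumes "invertible_mat n N"
  shows "lin_indep_basis n (\<lambda>j a. N a j)"
  unfolding lin_indep_basis_def
proof (intro allI impI)
  fix c :: "nat \<Rightarrow> real" and j
  assume c: "\<forall>a<n. (\<Sum>i<n. c i * N a i) = 0" and j: "j < n"
  obtain M where MN: "\<And>a b. a < n \<Longrightarrow> b < n \<Longrightarrow> (\<Sum>l<n. M a l * N l b) = (if a = b then 1 else 0)"
    using assms unfolding invertible_mat_def by blast
  have "c j = (\<Sum>i<n. (\<Sum>l<n. M j l * N l i) * c i)"
    using j by (simp add: MN if_distrib[where f="\<lambda>x. x * _"] cong: if_cong)
  also have "\<dots> = (\<Sum>i<n. \<Sum>l<n. M j l * (c i * N l i))"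
    by (simp add: sum_distrib_left sum_distrib_right mult.commute mult.left_commute)
  also have "\<dots> = (\<Sum>l<n. M j l * (\<Sum>i<n. c i * N l i))"
    by (subst sum.swap) (simp add: sum_distrib_left)
  also have "\<dots> = 0"
    using c by simp
  finally show "c j = 0" .
qed

locale model_frames =
  fixes n :: nat and B0 :: "nat \<Rightarrow> nat \<Rightarrow> real" and T0 :: "nat \<Rightarrow> nat \<Rightarrow> nat \<Rightarrow> nat \<Rightarrow> real"
    and B :: "'p \<Rightarrow> nat \<Rightarrow> nat \<Rightarrow> real" and T :: "'p \<Rightarrow> nat \<Rightarrow> nat \<Rightarrow> nat \<Rightarrow> nat \<Rightarrow> real"
    and \<Phi> \<Psi> :: "'p \<Rightarrow> (nat \<Rightarrow> real) \<Rightarrow> nat \<Rightarrow> real"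
  assumes linear_\<Phi>: "linear_on n (\<Phi> P)" and linear_\<Psi>: "linear_on n (\<Psi> P)"
    and inverse: "inverse_maps_on n (\<Phi> P) (\<Psi> P)"
    and bil_\<Phi>: "bil n B0 (\<Phi> P v) (\<Phi> P w) = bil n (B P) v w"
    and quad4_\<Phi>: "quad4 n T0 (\<Phi> P v1) (\<Phi> P v2) (\<Phi> P v3) (\<Phi> P v4) = quad4 n (T P) v1 v2 v3 v4"
begin

lemma \<Phi>_\<Psi>: "a < n \<Longrightarrow> \<Phi> P (\<Psi> P v) a = v a"
  using inverse unfolding inverse_maps_on_def by blast

lemma zero_modeled:
  "\<exists>M. invertible_mat n M \<and>
     (\<forall>v w. bil n B0 (mv n M v) (mv n M w) = bil n (B P) v w) \<and>
     (\<forall>v1 v2 v3 v4. quad4 n T0 (mv n M v1) (mv n M v2) (mv n M v3) (mv n M v4)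
        = quad4 n (T P) v1 v2 v3 v4)"
proof (intro exI conjI allI)
  note M = mv_matrix_of[OF linear_\<Phi>[of P]]
  show "invertible_mat n (matrix_of (\<Phi> P))"
    by (rule invertible_mat_matrix_of[OF inverse linear_\<Phi> linear_\<Psi>])
  show "bil n B0 (mv n (matrix_of (\<Phi> P)) v) (mv n (matrix_of (\<Phi> P)) w) = bil n (B P) v w" for v w
    by (simp add: bil_cong[OF M M] bil_\<Phi>)
  show "quad4 n T0 (mv n (matrix_of (\<Phi> P)) v1) (mv n (matrix_of (\<Phi> P)) v2)
      (mv n (matrix_of (\<Phi> P)) v3) (mv n (matrix_of (\<Phi> P)) v4) = quad4 n (T P) v1 v2 v3 v4"
    for v1 v2 v3 v4
    by (simp add: quad4_cong[OF M M M M] quad4_\<Phi>)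
qed

lemma normalized_basis:
  "\<exists>Bv. lin_indep_basis n Bv \<and>
     (\<forall>a<n. \<forall>b<n. bil n (B P) (Bv a) (Bv b) = B0 a b) \<and>
     (\<forall>a<n. \<forall>b<n. \<forall>c<n. \<forall>d<n. quad4 n (T P) (Bv a) (Bv b) (Bv c) (Bv d) = T0 a b c d)"
proof (intro exI conjI allI impI)
  let ?Bv = "\<lambda>a. \<Psi> P (kdelta a)"
  show "lin_indep_basis n ?Bv"
    using lin_indep_basis_columns[OF invertible_mat_matrix_of[OF
          inverse_maps_on_sym[OF inverse] linear_\<Psi> linear_\<Phi>]]
    by (simp add: matrix_of_def)
  note \<Phi>\<Psi> = \<Phi>_\<Psi>[of _ P]
  fix a b c d assume "a < n" "b < n"
  then show "bil n (B P) (?Bv a) (?Bv b) = B0 a b"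
    by (simp add: bil_\<Phi>[symmetric] bil_cong[OF \<Phi>\<Psi> \<Phi>\<Psi>] bil_basis)
  assume "c < n" "d < n"
  then show "quad4 n (T P) (?Bv a) (?Bv b) (?Bv c) (?Bv d) = T0 a b c d"
    using \<open>a < n\<close> \<open>b < n\<close>
    by (simp add: quad4_\<Phi>[symmetric] quad4_cong[OF \<Phi>\<Psi> \<Phi>\<Psi> \<Phi>\<Psi> \<Phi>\<Psi>] quad4_basis)
qed

lemma curvature_homogeneous:
  "\<exists>M. invertible_mat n M \<and>
     (\<forall>v w. bil n (B Q) (mv n M v) (mv n M w) = bil n (B P) v w) \<and>
     (\<forall>v1 v2 v3 v4. quad4 n (T Q) (mv n M v1) (mv n M v2) (mv n M v3) (mv n M v4)
        = quad4 n (T P) v1 v2 v3 v4)"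
proof (intro exI conjI allI)
  let ?f = "\<lambda>v. \<Psi> Q (\<Phi> P v)"
  have lin: "linear_on n ?f"
    by (rule linear_on_comp[OF linear_\<Psi> linear_\<Phi>])
  note M = mv_matrix_of[OF lin]
  have \<Phi>f: "\<Phi> Q (?f v) a = \<Phi> P v a" if "a < n" for v a
    using \<Phi>_\<Psi>[OF that] .
  show "invertible_mat n (matrix_of ?f)"
    by (rule invertible_mat_matrix_of[OF inverse_maps_on_comp[OF inverse
          inverse_maps_on_sym[OF inverse] linear_\<Psi> linear_\<Psi>] lin
          linear_on_comp[OF linear_\<Psi> linear_\<Phi>]])
  show "bil n (B Q) (mv n (matrix_of ?f) v) (mv n (matrix_of ?f) w) = bil n (B P) v w" for v w
  proof -
    have "bil n (B Q) (mv n (matrix_of ?f) v) (mv n (matrix_of ?f) w) = bil n (B Q) (?f v) (?f w)"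
      by (rule bil_cong[OF M M])
    also have "\<dots> = bil n B0 (\<Phi> P v) (\<Phi> P w)"
      by (simp add: bil_\<Phi>[symmetric] bil_cong[OF \<Phi>f \<Phi>f])
    finally show ?thesis by (simp add: bil_\<Phi>)
  qed
  show "quad4 n (T Q) (mv n (matrix_of ?f) v1) (mv n (matrix_of ?f) v2)
      (mv n (matrix_of ?f) v3) (mv n (matrix_of ?f) v4) = quad4 n (T P) v1 v2 v3 v4"
    for v1 v2 v3 v4
  proof -
    have "quad4 n (T Q) (mv n (matrix_of ?f) v1) (mv n (matrix_of ?f) v2)
        (mv n (matrix_of ?f) v3) (mv n (matrix_of ?f) v4)
      = quad4 n (T Q) (?f v1) (?f v2) (?f v3) (?f v4)"
      by (rule quad4_cong[OF M M M M])
    also have "\<dots> = quad4 n T0 (\<Phi> P v1) (\<Phi> P v2) (\<Phi> P v3) (\<Phi> P v4)"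
      by (simp add: quad4_\<Phi>[symmetric] quad4_cong[OF \<Phi>f \<Phi>f \<Phi>f \<Phi>f])
    finally show ?thesis by (simp add: quad4_\<Phi>)
  qed
qed

end

definition has_pderiv :: "((nat \<Rightarrow> real) \<Rightarrow> real) \<Rightarrow> nat \<Rightarrow> (nat \<Rightarrow> real) \<Rightarrow> real \<Rightarrow> bool" where
  "has_pderiv h a x D \<longleftrightarrow> ((\<lambda>t. h (x(a := t))) has_real_derivative D) (at (x a))"

lemma has_pderiv_imp_pd: "has_pderiv h a x D \<Longrightarrow> pd h a x = D"
  unfolding has_pderiv_def pd_def by (rule DERIV_imp_deriv)

lemma has_pderiv_const: "has_pderiv (\<lambda>y. c) a x 0"
  unfolding has_pderiv_def by simp

lemma has_pderiv_compose_coord: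
  assumes "(G has_real_derivative G') (at (x p))"
  shows "has_pderiv (\<lambda>y. G (y p)) a x (G' * kdelta p a)"
proof (cases "p = a")
  case True
  then show ?thesis using assms unfolding has_pderiv_def kdelta_def by simp
next
  case False
  then show ?thesis unfolding has_pderiv_def kdelta_def by simp
qed

lemma has_pderiv_coord: "has_pderiv (\<lambda>y. y p) a x (kdelta p a)"
  using has_pderiv_compose_coord[of "\<lambda>t. t" 1] by simp

lemma has_pderiv_add:
  "has_pderiv f a x Df \<Longrightarrow> has_pderiv g a x Dg \<Longrightarrow> has_pderiv (\<lambda>y. f y + g y) a x (Df + Dg)"
  unfolding has_pderiv_def by (rule DERIV_add)

lemma has_pderiv_diff:
  "has_pderiv f a x Df \<Longrightarrow> has_pderiv g a x Dg \<Longrightarrow> has_pderiv (\<lambda>y. f y - g y) a x (Df - Dg)"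
  unfolding has_pderiv_def by (rule DERIV_diff)

lemma has_pderiv_mult:
  "has_pderiv f a x Df \<Longrightarrow> has_pderiv g a x Dg \<Longrightarrow> has_pderiv (\<lambda>y. f y * g y) a x (Df * g x + f x * Dg)"
  unfolding has_pderiv_def using DERIV_mult[of "\<lambda>t. f (x(a:=t))" Df "x a" UNIV "\<lambda>t. g (x(a:=t))" Dg]
  by (simp add: mult.commute)

lemma has_pderiv_cmult: "has_pderiv f a x D \<Longrightarrow> has_pderiv (\<lambda>y. c * f y) a x (c * D)"
  unfolding has_pderiv_def by (rule DERIV_cmult)

lemma has_pderiv_divide: "has_pderiv f a x D \<Longrightarrow> has_pderiv (\<lambda>y. f y / c) a x (D / c)"
  unfolding has_pderiv_def by (rule DERIV_cdivide)

lemma has_pderiv_sum: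
  "finite S \<Longrightarrow> (\<And>i. i \<in> S \<Longrightarrow> has_pderiv (f i) a x (D i)) \<Longrightarrow>
    has_pderiv (\<lambda>y. \<Sum>i\<in>S. f i y) a x (\<Sum>i\<in>S. D i)"
  unfolding has_pderiv_def by (rule DERIV_sum) auto

section \<open>The metric and its derivatives\<close>

definition phi :: "nat \<Rightarrow> (nat \<Rightarrow> real \<Rightarrow> real) \<Rightarrow> nat \<Rightarrow> (nat \<Rightarrow> real) \<Rightarrow> real" where
  "phi k F i y = 2 * F i (y i) * y (2*k+1+i)"

definition psi :: "nat \<Rightarrow> nat \<Rightarrow> (nat \<Rightarrow> real) \<Rightarrow> real" where
  "psi k i y = -2 * y 0 * y (2*k+1+i)"

lemma sum_sym_kdelta_mult:
  "(\<Sum>i\<in>{1..k}. sym_kdelta 0 i a b * f i) =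
     (if a = 0 \<and> b \<in> {1..k} then f b else 0) + (if b = 0 \<and> a \<in> {1..k} then f a else 0)"
proof -
  have "(\<Sum>i\<in>{1..k}. sym_kdelta 0 i a b * f i) =
      (\<Sum>i\<in>{1..k}. kdelta i b * (kdelta 0 a * f i)) + (\<Sum>i\<in>{1..k}. kdelta i a * (kdelta 0 b * f i))"
    unfolding sym_kdelta_def by (simp add: algebra_simps sum.distrib)
  then show ?thesis by (simp add: sum_kdelta_mult') (simp add: kdelta_def)
qed

lemma sum_kdelta_kdelta_mult:
  "(\<Sum>i\<in>{1..k}. kdelta i a * kdelta i b * f i) = (if a = b \<and> a \<in> {1..k} then f a else 0)"
  unfolding mult.assoc by (simp add: sum_kdelta_mult') (simp add: kdelta_def)

lemma gF_eq_model_ip_plus: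
  "gF k eps F y a b = model_ip k eps a b +
     (\<Sum>i\<in>{1..k}. sym_kdelta 0 i a b * phi k F i y + kdelta i a * kdelta i b * psi k i y)"
  unfolding sum.distrib sum_sym_kdelta_mult sum_kdelta_kdelta_mult
  by (auto simp: gF_def model_ip_def phi_def psi_def)

lemma model_ip_eq:
  "model_ip k eps a b = sym_kdelta 0 (k+1) a b + (\<Sum>i\<in>{1..k}.
     sym_kdelta i (k+1+i) a b + eps i * (kdelta (2*k+1+i) a * kdelta (2*k+1+i) b))"
proof -
  have uv_part: "sym_kdelta 0 (k+1) a b + (\<Sum>i\<in>{1..k}. sym_kdelta i (k+1+i) a b)
      = (if (a \<le> k \<and> b = a + k + 1) \<or> (b \<le> k \<and> a = b + k + 1) then 1 else 0)"
  proof -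
    have "sym_kdelta 0 (k+1) a b + (\<Sum>i\<in>{1..k}. sym_kdelta i (k+1+i) a b)
        = (\<Sum>j\<in>{0..k}. kdelta j a * kdelta (k+1+j) b) + (\<Sum>j\<in>{0..k}. kdelta j b * kdelta (k+1+j) a)"
      by (simp add: sym_kdelta_def sum.atLeast_Suc_atMost sum.distrib mult.commute)
    then show ?thesis
      by (simp add: sum_kdelta_mult') (auto simp: kdelta_def)
  qed
  have s_part: "(\<Sum>i\<in>{1..k}. eps i * (kdelta (2*k+1+i) a * kdelta (2*k+1+i) b))
      = (if a = b \<and> 2*k+2 \<le> a \<and> a < 3*k+2 then eps (a - (2*k+1)) else 0)"
  proof -
    have "(\<Sum>i\<in>{1..k}. eps i * (kdelta (2*k+1+i) a * kdelta (2*k+1+i) b)) =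
        (\<Sum>i\<in>{1..k}. kdelta i (a - (2*k+1)) * (if 2*k+1 < a \<and> a = b then eps i else 0))"
      by (intro sum.cong) (auto simp: kdelta_def)
    then show ?thesis
      by (subst (asm) sum_kdelta_mult') auto
  qed
  show ?thesis
    using uv_part s_part by (simp add: sum.distrib model_ip_def add.assoc[symmetric])
qed

lemma bil_model_ip:
  "bil (3*k+2) (model_ip k eps) v w = v 0 * w (k+1) + v (k+1) * w 0 + (\<Sum>i\<in>{1..k}.
     v i * w (k+1+i) + v (k+1+i) * w i + eps i * (v (2*k+1+i) * w (2*k+1+i)))"
  unfolding model_ip_eq[abs_def] bil_add bil_sum[OF finite_atLeastAtMost] bil_cmult
  by (intro arg_cong2[where f = "(+)"] sum.cong refl) (auto simp: bil_sym_kdelta bil_kdelta)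

lemma bil_gF:
  "bil (3*k+2) (gF k eps F y) v w = bil (3*k+2) (model_ip k eps) v w +
     (\<Sum>i\<in>{1..k}. phi k F i y * (v 0 * w i + v i * w 0) + psi k i y * (v i * w i))"
  unfolding gF_eq_model_ip_plus[abs_def] bil_add bil_sum[OF finite_atLeastAtMost]
    mult.commute[of _ "phi k F _ y"] mult.commute[of _ "psi k _ y"] bil_cmult
  by (intro arg_cong2[where f = "(+)"] sum.cong refl) (auto simp: bil_sym_kdelta bil_kdelta)

definition dphi :: "nat \<Rightarrow> (nat \<Rightarrow> real \<Rightarrow> real) \<Rightarrow> nat \<Rightarrow> nat \<Rightarrow> (nat \<Rightarrow> real) \<Rightarrow> real" where
  "dphi k F i a y =
     kdelta i a * (2 * deriv (F i) (y i) * y (2*k+1+i)) + kdelta (2*k+1+i) a * (2 * F i (y i))"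

definition dpsi :: "nat \<Rightarrow> nat \<Rightarrow> nat \<Rightarrow> (nat \<Rightarrow> real) \<Rightarrow> real" where
  "dpsi k i a y = kdelta 0 a * (-2 * y (2*k+1+i)) + kdelta (2*k+1+i) a * (-2 * y 0)"

definition ddphi :: "nat \<Rightarrow> (nat \<Rightarrow> real \<Rightarrow> real) \<Rightarrow> nat \<Rightarrow> nat \<Rightarrow> nat \<Rightarrow> (nat \<Rightarrow> real) \<Rightarrow> real" where
  "ddphi k F i a' a y = 2 * deriv (deriv (F i)) (y i) * kdelta i a' * kdelta i a * y (2*k+1+i)
      + 2 * deriv (F i) (y i) * sym_kdelta i (2*k+1+i) a' a"

definition ddpsi :: "nat \<Rightarrow> nat \<Rightarrow> nat \<Rightarrow> nat \<Rightarrow> real" where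
  "ddpsi k i a' a = -2 * sym_kdelta 0 (2*k+1+i) a' a"

definition dgF :: "nat \<Rightarrow> (nat \<Rightarrow> real \<Rightarrow> real) \<Rightarrow> nat \<Rightarrow> nat \<Rightarrow> nat \<Rightarrow> (nat \<Rightarrow> real) \<Rightarrow> real" where
  "dgF k F a b c y =
     (\<Sum>i\<in>{1..k}. sym_kdelta 0 i b c * dphi k F i a y + kdelta i b * kdelta i c * dpsi k i a y)"

definition ddgF_term :: "nat \<Rightarrow> (nat \<Rightarrow> real \<Rightarrow> real) \<Rightarrow> nat \<Rightarrow> nat \<Rightarrow> nat \<Rightarrow> nat \<Rightarrow> nat
                         \<Rightarrow> (nat \<Rightarrow> real) \<Rightarrow> real" where
  "ddgF_term k F i a' a b c y =
     sym_kdelta 0 i b c * ddphi k F i a' a y + kdelta i b * kdelta i c * ddpsi k i a' a"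

definition ddgF :: "nat \<Rightarrow> (nat \<Rightarrow> real \<Rightarrow> real) \<Rightarrow> nat \<Rightarrow> nat \<Rightarrow> nat \<Rightarrow> nat \<Rightarrow> (nat \<Rightarrow> real) \<Rightarrow> real" where
  "ddgF k F a' a b c y = (\<Sum>i\<in>{1..k}. ddgF_term k F i a' a b c y)"

definition dGamma1F :: "nat \<Rightarrow> (nat \<Rightarrow> real \<Rightarrow> real) \<Rightarrow> nat \<Rightarrow> nat \<Rightarrow> nat \<Rightarrow> nat
                        \<Rightarrow> (nat \<Rightarrow> real) \<Rightarrow> real" where
  "dGamma1F k F a b c d y = (ddgF k F a b c d y + ddgF k F a c b d y - ddgF k F a d b c y) / 2"

locale gF_metric =
  fixes k :: nat and eps :: "nat \<Rightarrow> real" and F :: "nat \<Rightarrow> real \<Rightarrow> real"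
  assumes F_deriv: "\<And>i u. i \<in> {1..k} \<Longrightarrow> (F i has_real_derivative deriv (F i) u) (at u)"
    and F_deriv2:
      "\<And>i u. i \<in> {1..k} \<Longrightarrow> (deriv (F i) has_real_derivative deriv (deriv (F i)) u) (at u)"
    and eps_square: "\<And>i. i \<in> {1..k} \<Longrightarrow> eps i * eps i = 1"
begin

lemma has_pderiv_phi:
  assumes "i \<in> {1..k}"
  shows "has_pderiv (phi k F i) a x (dphi k F i a x)"
proof -
  have "has_pderiv (\<lambda>y. 2 * F i (y i) * y (2*k+1+i)) a x
      (2 * (deriv (F i) (x i) * kdelta i a) * x (2*k+1+i) + 2 * F i (x i) * kdelta (2*k+1+i) a)"
    by (intro has_pderiv_mult has_pderiv_cmult has_pderiv_compose_coord has_pderiv_coord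
        F_deriv assms)
  then show ?thesis
    by (simp add: phi_def[abs_def] dphi_def algebra_simps)
qed

lemma has_pderiv_psi: "has_pderiv (psi k i) a x (dpsi k i a x)"
proof -
  have "has_pderiv (\<lambda>y. -2 * y 0 * y (2*k+1+i)) a x
      (-2 * kdelta 0 a * x (2*k+1+i) + -2 * x 0 * kdelta (2*k+1+i) a)"
    by (intro has_pderiv_mult has_pderiv_cmult has_pderiv_coord)
  then show ?thesis
    by (simp add: psi_def[abs_def] dpsi_def algebra_simps)
qed

lemma has_pderiv_gF: "has_pderiv (\<lambda>y. gF k eps F y b c) a x (dgF k F a b c x)"
proof -
  have "has_pderiv (\<lambda>y. model_ip k eps b c +
      (\<Sum>i\<in>{1..k}. sym_kdelta 0 i b c * phi k F i y + kdelta i b * kdelta i c * psi k i y)) a x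
      (0 + (\<Sum>i\<in>{1..k}.
              sym_kdelta 0 i b c * dphi k F i a x + kdelta i b * kdelta i c * dpsi k i a x))"
    by (intro has_pderiv_add has_pderiv_const has_pderiv_sum has_pderiv_cmult has_pderiv_phi
        has_pderiv_psi finite_atLeastAtMost)
  then show ?thesis
    by (simp add: gF_eq_model_ip_plus[of k eps F _ b c] dgF_def)
qed

lemma Gamma1_gF:
  "Gamma1 (gF k eps F) b c d y = (dgF k F b c d y + dgF k F c b d y - dgF k F d b c y) / 2"
  unfolding Gamma1_def has_pderiv_imp_pd[OF has_pderiv_gF] ..

lemma has_pderiv_dphi:
  assumes "i \<in> {1..k}"
  shows "has_pderiv (dphi k F i a) a' x (ddphi k F i a' a x)"
proof -
  have "has_pderiv (dphi k F i a) a' x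
      (kdelta i a * (2 * (deriv (deriv (F i)) (x i) * kdelta i a') * x (2*k+1+i)
          + 2 * deriv (F i) (x i) * kdelta (2*k+1+i) a')
       + kdelta (2*k+1+i) a * (2 * (deriv (F i) (x i) * kdelta i a')))"
    unfolding dphi_def[abs_def]
    by (intro has_pderiv_add has_pderiv_mult has_pderiv_cmult has_pderiv_compose_coord
        has_pderiv_coord F_deriv F_deriv2 assms)
  then show ?thesis
    by (simp add: ddphi_def sym_kdelta_def algebra_simps)
qed

lemma has_pderiv_dpsi: "has_pderiv (dpsi k i a) a' x (ddpsi k i a' a)"
proof -
  have "has_pderiv (dpsi k i a) a' x
      (kdelta 0 a * (-2 * kdelta (2*k+1+i) a') + kdelta (2*k+1+i) a * (-2 * kdelta 0 a'))"
    unfolding dpsi_def[abs_def] by (intro has_pderiv_add has_pderiv_cmult has_pderiv_coord)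
  then show ?thesis
    by (simp add: ddpsi_def sym_kdelta_def algebra_simps)
qed

lemma has_pderiv_dgF: "has_pderiv (dgF k F a b c) a' x (ddgF k F a' a b c x)"
  unfolding dgF_def[abs_def] ddgF_def ddgF_term_def
  by (intro has_pderiv_add has_pderiv_sum has_pderiv_cmult has_pderiv_dphi has_pderiv_dpsi
      finite_atLeastAtMost)

lemma has_pderiv_Gamma1_gF: "has_pderiv (Gamma1 (gF k eps F) b c d) a x (dGamma1F k F a b c d x)"
  unfolding Gamma1_gF[abs_def] dGamma1F_def
  by (intro has_pderiv_divide has_pderiv_add has_pderiv_diff has_pderiv_dgF)

end

section \<open>Christoffel symbols and curvature\<close>

lemma Gamma2_eqI:
  assumes "\<forall>e\<ge>n. C e = 0" and "\<forall>d<n. (\<Sum>e<n. C e * g x e d) = Gamma1 g a b d x"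
    and nondegenerate: "\<And>C'. \<forall>d<n. (\<Sum>e<n. C' e * g x e d) = 0 \<Longrightarrow> \<forall>e<n. C' e = 0"
  shows "Gamma2 g n x a b = C"
  unfolding Gamma2_def
proof (rule the_equality)
  show "(\<forall>e\<ge>n. C e = 0) \<and> (\<forall>d<n. (\<Sum>e<n. C e * g x e d) = Gamma1 g a b d x)"
    using assms(1,2) ..
next
  fix C' assume C': "(\<forall>e\<ge>n. C' e = 0) \<and> (\<forall>d<n. (\<Sum>e<n. C' e * g x e d) = Gamma1 g a b d x)"
  have "\<forall>d<n. (\<Sum>e<n. (C' e - C e) * g x e d) = 0"
    using C' assms(2) by (simp add: left_diff_distrib sum_subtractf)
  then have "\<forall>e<n. C' e - C e = 0"
    by (rule nondegenerate)
  then show "C' = C"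
    using C' assms(1) by (intro ext) (metis eq_iff_diff_eq_0 not_less)
qed

text \<open>At every point, the vector metrically dual to a covector \<open>h\<close> with \<open>h(\<partial>v_j) = 0\<close> is
  \<open>\<Sum>_j h(\<partial>u_j) \<partial>v_j + \<Sum>_i \<epsilon>_i h(\<partial>s_i) \<partial>s_i\<close>, because \<open>g(\<partial>v_j, \<cdot>) = du_j\<close> and
  \<open>g(\<partial>s_i, \<cdot>) = \<epsilon>_i ds_i\<close>.\<close>
definition raise_index :: "nat \<Rightarrow> (nat \<Rightarrow> real) \<Rightarrow> (nat \<Rightarrow> real) \<Rightarrow> nat \<Rightarrow> real" where
  "raise_index k eps h e =
     (if k+1 \<le> e \<and> e \<le> 2*k+1 then h (e - (k+1))
      else if 2*k+2 \<le> e \<and> e < 3*k+2 then eps (e - (2*k+1)) * h e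
      else 0)"

lemma has_pderiv_raise_index:
  "(\<And>d. has_pderiv (h d) a x (D d)) \<Longrightarrow>
    has_pderiv (\<lambda>y. raise_index k eps (\<lambda>d. h d y) e) a x (raise_index k eps D e)"
  unfolding raise_index_def by (auto intro: has_pderiv_cmult has_pderiv_const)

lemma sum_raise_index_mult:
  assumes "\<And>j. j \<in> {k+1..2*k+1} \<Longrightarrow> h' j = 0"
  shows "(\<Sum>e<3*k+2. raise_index k eps h e * h' e) = (\<Sum>i\<in>{1..k}. eps i * h (2*k+1+i) * h' (2*k+1+i))"
proof -
  have "(\<Sum>e<3*k+2. raise_index k eps h e * h' e)
      = (\<Sum>e\<in>{2*k+2..<3*k+2}. eps (e - (2*k+1)) * h e * h' e)"
    using assms by (intro sum.mono_neutral_cong_right) (auto simp: raise_index_def)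
  also have "\<dots> = (\<Sum>i\<in>{1..k}. eps i * h (2*k+1+i) * h' (2*k+1+i))"
    by (rule sum.reindex_bij_witness[of _ "\<lambda>i. 2*k+1+i" "\<lambda>e. e - (2*k+1)"]) auto
  finally show ?thesis .
qed

lemma sum_mult_gF_v:
  assumes "j \<le> k"
  shows "(\<Sum>e<3*k+2. C e * gF k eps F y e (k+1+j)) = C j"
proof -
  have "(\<Sum>e<3*k+2. C e * gF k eps F y e (k+1+j)) = (\<Sum>e<3*k+2. if e = j then C j else 0)"
    using assms by (intro sum.cong) (auto simp: gF_def)
  then show ?thesis using assms by simp
qed

lemma sum_mult_gF:
  assumes "\<And>e. e \<le> k \<Longrightarrow> C e = 0" and "d < 3*k+2"
  shows "(\<Sum>e<3*k+2. C e * gF k eps F y e d) =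
    (if d \<le> k then C (k+1+d) else if 2*k+2 \<le> d then eps (d - (2*k+1)) * C d else 0)"
proof -
  have "(\<Sum>e<3*k+2. C e * gF k eps F y e d) =
      (\<Sum>e<3*k+2. if d \<le> k then (if e = k+1+d then C e else 0)
        else if 2*k+2 \<le> d then (if e = d then eps (d - (2*k+1)) * C e else 0) else 0)"
    using assms by (intro sum.cong) (auto simp: gF_def)
  also have "\<dots> = (if d \<le> k then C (k+1+d) else if 2*k+2 \<le> d then eps (d - (2*k+1)) * C d else 0)"
    using assms(2)
    by (cases "d \<le> k"; cases "2*k+2 \<le> d") (simp_all, auto intro!: arg_cong[where f = C])
  finally show ?thesis .
qed

lemma kdelta_v_index:
  assumes "e \<in> {k+1..2*k+1}" "p \<notin> {k+1..2*k+1}"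
  shows "kdelta p e = 0" "kdelta e p = 0"
  using assms by (auto simp: kdelta_def)

lemma dgF_v_index:
  assumes "e \<in> {k+1..2*k+1}"
  shows "dgF k F e b c y = 0" "dgF k F a e c y = 0" "dgF k F a b e y = 0"
  unfolding dgF_def dphi_def dpsi_def sym_kdelta_def
  by (intro sum.neutral ballI; simp add: kdelta_v_index[OF assms])+

lemma ddgF_v_index:
  assumes "e \<in> {k+1..2*k+1}"
  shows "ddgF k F a' e b c y = 0" "ddgF k F a' a e c y = 0" "ddgF k F a' a b e y = 0"
  unfolding ddgF_def ddgF_term_def ddphi_def ddpsi_def sym_kdelta_def
  by (intro sum.neutral ballI; simp add: kdelta_v_index[OF assms])+

lemma dGamma1F_v_index: "e \<in> {k+1..2*k+1} \<Longrightarrow> dGamma1F k F a b c e y = 0"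
  unfolding dGamma1F_def by (simp add: ddgF_v_index)

lemma dgF_s_index:
  assumes i: "i \<in> {1..k}"
  shows "dgF k F (2*k+1+i) b c y
      = 2 * F i (y i) * sym_kdelta 0 i b c - 2 * y 0 * (kdelta i b * kdelta i c)"
    "dgF k F b (2*k+1+i) c y = 0" "dgF k F b c (2*k+1+i) y = 0"
proof -
  have "dgF k F (2*k+1+i) b c y =
      (\<Sum>j\<in>{1..k}. kdelta j i
        * (2 * F j (y j) * sym_kdelta 0 j b c - 2 * y 0 * (kdelta j b * kdelta j c)))"
    unfolding dgF_def dphi_def dpsi_def by (intro sum.cong) (auto simp: kdelta_def)
  then show "dgF k F (2*k+1+i) b c y
      = 2 * F i (y i) * sym_kdelta 0 i b c - 2 * y 0 * (kdelta i b * kdelta i c)"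
    using i by (simp add: sum_kdelta_mult')
  show "dgF k F b (2*k+1+i) c y = 0" "dgF k F b c (2*k+1+i) y = 0"
    unfolding dgF_def sym_kdelta_def by (auto simp: kdelta_def intro!: sum.neutral)
qed

definition curvF :: "nat \<Rightarrow> (nat \<Rightarrow> real) \<Rightarrow> (nat \<Rightarrow> real \<Rightarrow> real) \<Rightarrow> (nat \<Rightarrow> real)
                     \<Rightarrow> nat \<Rightarrow> nat \<Rightarrow> nat \<Rightarrow> nat \<Rightarrow> real" where
  "curvF k eps F x a b c d = (\<Sum>i\<in>{1..k}.
     (1 + deriv (F i) (x i)) * (wedge_kdelta 0 i a b * wedge_kdelta i (2*k+1+i) c d
                                + wedge_kdelta i (2*k+1+i) a b * wedge_kdelta 0 i c d)
     - eps i * (F i (x i))\<^sup>2 * (wedge_kdelta 0 i a b * wedge_kdelta 0 i c d))"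

lemma ddgF_term_swap: "ddgF_term k F i a' a b c y = ddgF_term k F i a a' b c y"
  by (simp add: ddgF_term_def ddphi_def ddpsi_def sym_kdelta_def algebra_simps)

lemma dGamma1F_diff:
  "dGamma1F k F a b c d x - dGamma1F k F b a c d x = (\<Sum>i\<in>{1..k}.
     (ddgF_term k F i a c b d x - ddgF_term k F i a d b c x
      - ddgF_term k F i b c a d x + ddgF_term k F i b d a c x) / 2)"
  unfolding dGamma1F_def ddgF_def ddgF_term_swap[of k F _ b a]
  by (simp add: sum.distrib sum_subtractf sum_divide_distrib[symmetric]) (simp add: field_simps)

text \<open>Every monomial contains exactly one Kronecker delta in each of \<open>a, b, c, d\<close>. Such a polynomial
  vanishes for all values of the indices only if it vanishes identically, so this is a ring identity
  and needs no case analysis on the indices.\<close>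
lemma curvF_summand:
  "(ddgF_term k F i a c b d x - ddgF_term k F i a d b c x
          - ddgF_term k F i b c a d x + ddgF_term k F i b d a c x) / 2
    + e * ((x 0 * (kdelta i b * kdelta i c) - f * sym_kdelta 0 i b c)
            * (f * sym_kdelta 0 i a d - x 0 * (kdelta i a * kdelta i d))
         - (x 0 * (kdelta i a * kdelta i c) - f * sym_kdelta 0 i a c)
            * (f * sym_kdelta 0 i b d - x 0 * (kdelta i b * kdelta i d)))
    = (1 + deriv (F i) (x i)) * (wedge_kdelta 0 i a b * wedge_kdelta i (2*k+1+i) c d
                                + wedge_kdelta i (2*k+1+i) a b * wedge_kdelta 0 i c d)
      - e * f\<^sup>2 * (wedge_kdelta 0 i a b * wedge_kdelta 0 i c d)"
  unfolding ddgF_term_def ddphi_def ddpsi_def sym_kdelta_def wedge_kdelta_def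
  by (simp add: field_simps power2_eq_square)

context gF_metric
begin

lemma Gamma1_gF_v_index:
  assumes "e \<in> {k+1..2*k+1}"
  shows "Gamma1 (gF k eps F) b c e y = 0" "Gamma1 (gF k eps F) a e c y = 0"
  unfolding Gamma1_gF by (simp_all add: dgF_v_index[OF assms])

lemma sum_raise_index_mult_gF:
  assumes "\<And>j. j \<in> {k+1..2*k+1} \<Longrightarrow> h j = 0" and d: "d < 3*k+2"
  shows "(\<Sum>e<3*k+2. raise_index k eps h e * gF k eps F y e d) = h d"
proof -
  have "(\<Sum>e<3*k+2. raise_index k eps h e * gF k eps F y e d) =
      (if d \<le> k then h d else if 2*k+2 \<le> d then eps (d - (2*k+1)) * eps (d - (2*k+1)) * h d else 0)"
    using d by (subst sum_mult_gF) (auto simp: raise_index_def)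
  also have "\<dots> = h d"
  proof -
    consider "d \<le> k" | "d \<in> {k+1..2*k+1}" | "2*k+2 \<le> d" "d - (2*k+1) \<in> {1..k}"
      using d by fastforce
    then show ?thesis
      by cases (use assms(1)[of d] eps_square[of "d - (2*k+1)"] in auto)
  qed
  finally show ?thesis .
qed

lemma gF_nondegenerate:
  assumes C: "\<forall>d<3*k+2. (\<Sum>e<3*k+2. C e * gF k eps F y e d) = 0"
  shows "\<forall>e<3*k+2. C e = 0"
proof (intro allI impI)
  have u: "C j = 0" if "j \<le> k" for j
    using C[rule_format, of "k+1+j"] sum_mult_gF_v[OF that, of C eps F y] that by simp
  have lowered:
    "(if d \<le> k then C (k+1+d) else if 2*k+2 \<le> d then eps (d - (2*k+1)) * C d else 0) = 0"
    if "d < 3*k+2" for d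
    using C[rule_format, OF that] sum_mult_gF[where C = C, OF u that, of eps F y] by simp
  fix e :: nat assume e: "e < 3*k+2"
  consider "e \<le> k" | "k+1 \<le> e" "e \<le> 2*k+1" | "2*k+2 \<le> e" by linarith
  then show "C e = 0"
  proof cases
    case 1
    then show ?thesis by (rule u)
  next
    case 2
    then have "e - (k+1) < 3*k+2" "e - (k+1) \<le> k" "k+1+(e - (k+1)) = e" by auto
    then show ?thesis using lowered[of "e - (k+1)"] by simp
  next
    case 3
    then have "eps (e - (2*k+1)) * C e = 0" using lowered[OF e] by simp
    moreover have "e - (2*k+1) \<in> {1..k}" using 3 e by auto
    ultimately show ?thesis using eps_square[of "e - (2*k+1)"] by auto
  qed
qed

lemma Gamma2_gF:
  "Gamma2 (gF k eps F) (3*k+2) y b c = raise_index k eps (\<lambda>d. Gamma1 (gF k eps F) b c d y)"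
proof (rule Gamma2_eqI)
  show "\<forall>e\<ge>3*k+2. raise_index k eps (\<lambda>d. Gamma1 (gF k eps F) b c d y) e = 0"
    by (simp add: raise_index_def)
  show "\<forall>d<3*k+2.
      (\<Sum>e<3*k+2. raise_index k eps (\<lambda>d. Gamma1 (gF k eps F) b c d y) e * gF k eps F y e d)
        = Gamma1 (gF k eps F) b c d y"
    by (intro allI impI sum_raise_index_mult_gF Gamma1_gF_v_index)
qed (rule gF_nondegenerate)

lemma pd_Gamma2_gF:
  "pd (\<lambda>y. Gamma2 (gF k eps F) (3*k+2) y b c e) a x
    = raise_index k eps (\<lambda>d. dGamma1F k F a b c d x) e"
  unfolding Gamma2_gF
  by (intro has_pderiv_imp_pd has_pderiv_raise_index has_pderiv_Gamma1_gF)

lemma curv_gF_eq: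
  assumes "d < 3*k+2"
  shows "curv (gF k eps F) (3*k+2) x a b c d = dGamma1F k F a b c d x - dGamma1F k F b a c d x
    + (\<Sum>i\<in>{1..k}. eps i *
        (Gamma1 (gF k eps F) b c (2*k+1+i) x * Gamma1 (gF k eps F) a (2*k+1+i) d x
         - Gamma1 (gF k eps F) a c (2*k+1+i) x * Gamma1 (gF k eps F) b (2*k+1+i) d x))"
proof -
  have derivative_terms:
    "(\<Sum>e<3*k+2. pd (\<lambda>y. Gamma2 (gF k eps F) (3*k+2) y b c e) a x * gF k eps F x e d)
      = dGamma1F k F a b c d x"
    for a b c
    unfolding pd_Gamma2_gF by (intro sum_raise_index_mult_gF dGamma1F_v_index assms)
  have quadratic_terms:
    "(\<Sum>e<3*k+2. Gamma2 (gF k eps F) (3*k+2) x b c e * Gamma1 (gF k eps F) a e d x)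
     = (\<Sum>i\<in>{1..k}.
          eps i * Gamma1 (gF k eps F) b c (2*k+1+i) x * Gamma1 (gF k eps F) a (2*k+1+i) d x)"
    for a b c
    unfolding Gamma2_gF by (intro sum_raise_index_mult Gamma1_gF_v_index)
  show ?thesis
    unfolding curv_def sum.distrib derivative_terms quadratic_terms
    by (simp add: sum_subtractf right_diff_distrib mult.assoc)
qed

lemma Gamma1_gF_s_index:
  assumes "i \<in> {1..k}"
  shows "Gamma1 (gF k eps F) b c (2*k+1+i) y
      = y 0 * (kdelta i b * kdelta i c) - F i (y i) * sym_kdelta 0 i b c"
    "Gamma1 (gF k eps F) a (2*k+1+i) d y
      = F i (y i) * sym_kdelta 0 i a d - y 0 * (kdelta i a * kdelta i d)"
  unfolding Gamma1_gF dgF_s_index[OF assms] by simp_all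

lemma curv_gF:
  assumes "d < 3*k+2"
  shows "curv (gF k eps F) (3*k+2) x a b c d = curvF k eps F x a b c d"
  unfolding curv_gF_eq[OF assms] dGamma1F_diff curvF_def sum.distrib[symmetric]
  by (intro sum.cong refl) (simp only: Gamma1_gF_s_index curvF_summand)

end

lemma index_bounds:
  fixes k :: nat
  shows "0 < 3*k+2" "i \<in> {1..k} \<Longrightarrow> i < 3*k+2" "i \<in> {1..k} \<Longrightarrow> 2*k+1+i < 3*k+2"
  by auto

lemma model_R_eq:
  "model_R k a b c d = (\<Sum>i\<in>{1..k}.
     wedge_kdelta 0 i a b * wedge_kdelta i (2*k+1+i) c d
     + wedge_kdelta i (2*k+1+i) a b * wedge_kdelta 0 i c d)"
  unfolding model_R_def Let_def if_tuple_eq_kdelta wedge_kdelta_def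
  by (intro sum.cong refl) (simp add: algebra_simps)

lemma quad4_model_R:
  "quad4 (3*k+2) (model_R k) v1 v2 v3 v4 = (\<Sum>i\<in>{1..k}.
     wedge 0 i v1 v2 * wedge i (2*k+1+i) v3 v4 + wedge i (2*k+1+i) v1 v2 * wedge 0 i v3 v4)"
  unfolding model_R_eq[abs_def] quad4_sum[OF finite_atLeastAtMost]
  by (intro sum.cong refl) (simp only: quad4_add quad4_tensor bil_wedge_kdelta index_bounds)

lemma quad4_curvF:
  "quad4 (3*k+2) (curvF k eps F x) v1 v2 v3 v4 = (\<Sum>i\<in>{1..k}.
     (1 + deriv (F i) (x i))
       * (wedge 0 i v1 v2 * wedge i (2*k+1+i) v3 v4 + wedge i (2*k+1+i) v1 v2 * wedge 0 i v3 v4)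
     - eps i * (F i (x i))\<^sup>2 * (wedge 0 i v1 v2 * wedge 0 i v3 v4))"
  unfolding curvF_def[abs_def] quad4_sum[OF finite_atLeastAtMost]
  by (intro sum.cong refl)
    (simp only: diff_conv_add_uminus mult_minus_left[symmetric] quad4_add quad4_cmult quad4_tensor
      bil_wedge_kdelta index_bounds)

section \<open>The normalizing frame\<close>

definition curv_coeff :: "(nat \<Rightarrow> real \<Rightarrow> real) \<Rightarrow> (nat \<Rightarrow> real) \<Rightarrow> nat \<Rightarrow> real" where
  "curv_coeff F P i = 1 + deriv (F i) (P i)"

definition frame_scale :: "(nat \<Rightarrow> real \<Rightarrow> real) \<Rightarrow> (nat \<Rightarrow> real) \<Rightarrow> nat \<Rightarrow> real" where
  "frame_scale F P i = sqrt \<bar>curv_coeff F P i\<bar>"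

definition frame_sign :: "(nat \<Rightarrow> real \<Rightarrow> real) \<Rightarrow> (nat \<Rightarrow> real) \<Rightarrow> nat \<Rightarrow> real" where
  "frame_sign F P i = sgn (curv_coeff F P i)"

definition frame_shear :: "(nat \<Rightarrow> real) \<Rightarrow> (nat \<Rightarrow> real \<Rightarrow> real) \<Rightarrow> (nat \<Rightarrow> real) \<Rightarrow> nat \<Rightarrow> real" where
  "frame_shear eps F P i = - (eps i * (F i (P i))\<^sup>2) / (2 * curv_coeff F P i)"

text \<open>With \<open>L, \<mu>, \<beta>\<close> the scale, sign and shear, the coordinates of \<open>frame\<close> are
  \<open>du_0' = du_0\<close>, \<open>du_i' = L_i du_i\<close> and \<open>ds_i' = \<mu>_i (ds_i - \<beta>_i du_0)\<close>, so that
  \<open>du_0' \<and> du_i' = L_i A_i\<close> and \<open>du_i' \<and> ds_i' = L_i \<mu>_i (B_i + \<beta>_i A_i)\<close>; the \<open>dv_j'\<close> absorb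
  the remaining metric terms.\<close>
definition frame :: "nat \<Rightarrow> (nat \<Rightarrow> real) \<Rightarrow> (nat \<Rightarrow> real \<Rightarrow> real) \<Rightarrow> (nat \<Rightarrow> real)
                     \<Rightarrow> (nat \<Rightarrow> real) \<Rightarrow> nat \<Rightarrow> real" where
  "frame k eps F P v a =
    (let L = frame_scale F P; \<mu> = frame_sign F P; \<beta> = frame_shear eps F P in
     if a = 0 then v 0
     else if a \<le> k then L a * v a
     else if a = k+1 then
       v (k+1) + (\<Sum>i\<in>{1..k}. eps i * \<beta> i * (v (2*k+1+i) - \<beta> i * v 0 / 2))
     else if a \<le> 2*k+1 then
       (let j = a - (k+1) in (v a + phi k F j P * v 0 + psi k j P * v j / 2) / L j)
     else if a < 3*k+2 then (let i = a - (2*k+1) in \<mu> i * (v a - \<beta> i * v 0))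
     else 0)"

definition frame_inv :: "nat \<Rightarrow> (nat \<Rightarrow> real) \<Rightarrow> (nat \<Rightarrow> real \<Rightarrow> real) \<Rightarrow> (nat \<Rightarrow> real)
                         \<Rightarrow> (nat \<Rightarrow> real) \<Rightarrow> nat \<Rightarrow> real" where
  "frame_inv k eps F P w a =
    (let L = frame_scale F P; \<mu> = frame_sign F P; \<beta> = frame_shear eps F P in
     if a = 0 then w 0
     else if a \<le> k then w a / L a
     else if a = k+1 then
       w (k+1) - (\<Sum>i\<in>{1..k}. eps i * \<beta> i * (\<mu> i * w (2*k+1+i) + \<beta> i * w 0 / 2))
     else if a \<le> 2*k+1 then
       (let j = a - (k+1) in L j * w a - phi k F j P * w 0 - psi k j P * w j / (2 * L j))
     else if a < 3*k+2 then (let i = a - (2*k+1) in \<mu> i * w a + \<beta> i * w 0)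
     else 0)"

lemma index_cases:
  fixes a k :: nat
  assumes "a < 3*k+2"
  obtains "a = 0" | i where "i \<in> {1..k}" "a = i" | "a = k+1" | j where "j \<in> {1..k}" "a = k+1+j"
    | i where "i \<in> {1..k}" "a = 2*k+1+i"
proof -
  consider "a = 0" | "1 \<le> a \<and> a \<le> k" | "a = k+1" | "k+2 \<le> a \<and> a \<le> 2*k+1" | "2*k+2 \<le> a"
    by linarith
  then show thesis
  proof cases
    case 4
    then have "a - (k+1) \<in> {1..k}" "a = k+1 + (a - (k+1))" by auto
    then show ?thesis by (rule that(4))
  next
    case 5
    then have "a - (2*k+1) \<in> {1..k}" "a = 2*k+1 + (a - (2*k+1))" using assms by auto
    then show ?thesis by (rule that(5))
  qed (use that in auto)
qed

context
  fixes k :: nat and eps :: "nat \<Rightarrow> real" and F :: "nat \<Rightarrow> real \<Rightarrow> real" and P :: "nat \<Rightarrow> real"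
begin

lemma frame_simps:
  "frame k eps F P v 0 = v 0"
  "i \<in> {1..k} \<Longrightarrow> frame k eps F P v i = frame_scale F P i * v i"
  "frame k eps F P v (k+1) = v (k+1)
     + (\<Sum>i\<in>{1..k}. eps i * frame_shear eps F P i * (v (2*k+1+i) - frame_shear eps F P i * v 0 / 2))"
  "j \<in> {1..k} \<Longrightarrow> frame k eps F P v (k+1+j)
     = (v (k+1+j) + phi k F j P * v 0 + psi k j P * v j / 2) / frame_scale F P j"
  "i \<in> {1..k} \<Longrightarrow> frame k eps F P v (2*k+1+i)
     = frame_sign F P i * (v (2*k+1+i) - frame_shear eps F P i * v 0)"
  by (simp_all add: frame_def Let_def)

lemma frame_inv_simps:
  "frame_inv k eps F P w 0 = w 0"
  "i \<in> {1..k} \<Longrightarrow> frame_inv k eps F P w i = w i / frame_scale F P i"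
  "frame_inv k eps F P w (k+1) = w (k+1)
     - (\<Sum>i\<in>{1..k}. eps i * frame_shear eps F P i
          * (frame_sign F P i * w (2*k+1+i) + frame_shear eps F P i * w 0 / 2))"
  "j \<in> {1..k} \<Longrightarrow> frame_inv k eps F P w (k+1+j)
     = frame_scale F P j * w (k+1+j) - phi k F j P * w 0
       - psi k j P * w j / (2 * frame_scale F P j)"
  "i \<in> {1..k} \<Longrightarrow> frame_inv k eps F P w (2*k+1+i)
     = frame_sign F P i * w (2*k+1+i) + frame_shear eps F P i * w 0"
  by (simp_all add: frame_inv_def Let_def)

lemma linear_on_frame: "linear_on (3*k+2) (frame k eps F P)"
proof (rule linear_onI)
  fix u v :: "nat \<Rightarrow> real" and c :: real and a :: nat
  show "frame k eps F P (\<lambda>x. u x + v x) a = frame k eps F P u a + frame k eps F P v a"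
    by (simp add: frame_def Let_def sum.distrib[symmetric] algebra_simps add_divide_distrib)
  show "frame k eps F P (\<lambda>x. c * u x) a = c * frame k eps F P u a"
    by (simp add: frame_def Let_def sum_distrib_left algebra_simps)
next
  fix u v :: "nat \<Rightarrow> real" and a
  assume "\<And>x. x < 3*k+2 \<Longrightarrow> u x = v x" "a < 3*k+2"
  then show "frame k eps F P u a = frame k eps F P v a"
    unfolding frame_def Let_def by (auto intro!: sum.cong)
qed

lemma linear_on_frame_inv: "linear_on (3*k+2) (frame_inv k eps F P)"
proof (rule linear_onI)
  fix u v :: "nat \<Rightarrow> real" and c :: real and a :: nat
  show "frame_inv k eps F P (\<lambda>x. u x + v x) a = frame_inv k eps F P u a + frame_inv k eps F P v a"
    by (simp add: frame_inv_def Let_def sum.distrib[symmetric] algebra_simps add_divide_distrib)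
  show "frame_inv k eps F P (\<lambda>x. c * u x) a = c * frame_inv k eps F P u a"
    by (simp add: frame_inv_def Let_def sum_distrib_left algebra_simps)
next
  fix u v :: "nat \<Rightarrow> real" and a
  assume "\<And>x. x < 3*k+2 \<Longrightarrow> u x = v x" "a < 3*k+2"
  then show "frame_inv k eps F P u a = frame_inv k eps F P v a"
    unfolding frame_inv_def Let_def by (auto intro!: sum.cong)
qed

end

locale gF_frame = gF_metric +
  assumes deriv_F_plus_one: "\<And>i u. i \<in> {1..k} \<Longrightarrow> deriv (F i) u + 1 \<noteq> 0"
begin

lemma curv_coeff_nonzero: "i \<in> {1..k} \<Longrightarrow> curv_coeff F P i \<noteq> 0"
  unfolding curv_coeff_def using deriv_F_plus_one by (simp add: add.commute)

lemma frame_scale_nonzero: "i \<in> {1..k} \<Longrightarrow> frame_scale F P i \<noteq> 0"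
  unfolding frame_scale_def using curv_coeff_nonzero by simp

lemma frame_sign_square: "i \<in> {1..k} \<Longrightarrow> frame_sign F P i * frame_sign F P i = 1"
  unfolding frame_sign_def using curv_coeff_nonzero by (simp add: sgn_if)

lemma frame_sign_cancel: "i \<in> {1..k} \<Longrightarrow> frame_sign F P i * (frame_sign F P i * x) = x"
  using frame_sign_square by (simp add: mult.assoc[symmetric])

lemma frame_frame_inv:
  assumes "a < 3*k+2"
  shows "frame k eps F P (frame_inv k eps F P w) a = w a"
  using assms
proof (cases rule: index_cases)
  case (2 i)
  then show ?thesis using frame_scale_nonzero[OF 2(1)] by (simp add: frame_simps frame_inv_simps)
next
  case 3
  show ?thesis
    unfolding 3 frame_simps(3) frame_inv_simps(1,3)
    by (simp only: frame_inv_simps(5) cong: sum.cong) (simp add: algebra_simps)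
next
  case (4 j)
  show ?thesis
    unfolding 4(2) frame_simps(4)[OF 4(1)] frame_inv_simps(1) frame_inv_simps(2)[OF 4(1)]
      frame_inv_simps(4)[OF 4(1)]
    using frame_scale_nonzero[OF 4(1)] by (simp add: field_simps)
next
  case (5 i)
  show ?thesis
    unfolding 5 frame_simps(5)[OF 5(1)] frame_inv_simps(1) frame_inv_simps(5)[OF 5(1)]
    by (simp add: frame_sign_cancel[OF 5(1)])
qed (simp add: frame_simps frame_inv_simps)

lemma frame_inv_frame:
  assumes "a < 3*k+2"
  shows "frame_inv k eps F P (frame k eps F P v) a = v a"
  using assms
proof (cases rule: index_cases)
  case (2 i)
  then show ?thesis using frame_scale_nonzero[OF 2(1)] by (simp add: frame_simps frame_inv_simps)
next
  case 3
  show ?thesis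
    unfolding 3 frame_inv_simps(3) frame_simps(1,3)
    by (simp only: frame_simps(5) frame_sign_cancel cong: sum.cong) (simp add: algebra_simps)
next
  case (4 j)
  show ?thesis
    unfolding 4(2) frame_inv_simps(4)[OF 4(1)] frame_simps(1) frame_simps(2)[OF 4(1)]
      frame_simps(4)[OF 4(1)]
    using frame_scale_nonzero[OF 4(1)] by (simp add: field_simps)
next
  case (5 i)
  show ?thesis
    unfolding 5 frame_inv_simps(5)[OF 5(1)] frame_simps(1) frame_simps(5)[OF 5(1)]
      frame_sign_cancel[OF 5(1)]
    by simp
qed (simp add: frame_simps frame_inv_simps)

lemma inverse_maps_on_frame: "inverse_maps_on (3*k+2) (frame k eps F P) (frame_inv k eps F P)"
  unfolding inverse_maps_on_def by (simp add: frame_frame_inv frame_inv_frame)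

lemma frame_sign_mult_cancel:
  "i \<in> {1..k} \<Longrightarrow> frame_sign F P i * x * (frame_sign F P i * y) = x * y"
  using frame_sign_square by (metis mult.commute mult.left_commute mult_1)

lemma frame_scale_sign:
  "frame_scale F P i * frame_scale F P i * frame_sign F P i = curv_coeff F P i"
  unfolding frame_scale_def frame_sign_def by (simp add: abs_mult_sgn)

lemma frame_shear_coeff:
  "i \<in> {1..k} \<Longrightarrow> 2 * frame_shear eps F P i * curv_coeff F P i = - (eps i * (F i (P i))\<^sup>2)"
  unfolding frame_shear_def using curv_coeff_nonzero by simp

lemma bil_frame:
  "bil (3*k+2) (model_ip k eps) (frame k eps F P v) (frame k eps F P w)
    = bil (3*k+2) (gF k eps F P) v w"
proof -
  let ?v = "frame k eps F P v" and ?w = "frame k eps F P w" and ?\<beta> = "frame_shear eps F P"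
  let ?corr = "\<lambda>i. eps i * ?\<beta> i * (v 0 * w (2*k+1+i) + v (2*k+1+i) * w 0 - ?\<beta> i * v 0 * w 0)"
  have pair:
    "?v 0 * ?w (k+1) + ?v (k+1) * ?w 0 = v 0 * w (k+1) + v (k+1) * w 0 + (\<Sum>i\<in>{1..k}. ?corr i)"
    unfolding frame_simps(1,3)
    by (simp add: algebra_simps sum_distrib_left sum_distrib_right sum.distrib[symmetric])
  have summand:
    "?v i * ?w (k+1+i) + ?v (k+1+i) * ?w i + eps i * (?v (2*k+1+i) * ?w (2*k+1+i)) + ?corr i
      = v i * w (k+1+i) + v (k+1+i) * w i + eps i * (v (2*k+1+i) * w (2*k+1+i))
        + (phi k F i P * (v 0 * w i + v i * w 0) + psi k i P * (v i * w i))"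
    if i: "i \<in> {1..k}" for i
    unfolding frame_simps(1) frame_simps(2,4,5)[OF i] frame_sign_mult_cancel[OF i]
    using frame_scale_nonzero[OF i] by (simp add: field_simps)
  have "bil (3*k+2) (model_ip k eps) ?v ?w = v 0 * w (k+1) + v (k+1) * w 0 + (\<Sum>i\<in>{1..k}.
      ?v i * ?w (k+1+i) + ?v (k+1+i) * ?w i + eps i * (?v (2*k+1+i) * ?w (2*k+1+i)) + ?corr i)"
    unfolding bil_model_ip pair by (simp add: sum.distrib)
  also have "\<dots> = v 0 * w (k+1) + v (k+1) * w 0 + (\<Sum>i\<in>{1..k}.
      v i * w (k+1+i) + v (k+1+i) * w i + eps i * (v (2*k+1+i) * w (2*k+1+i))
      + (phi k F i P * (v 0 * w i + v i * w 0) + psi k i P * (v i * w i)))"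
    by (intro arg_cong[where f = "\<lambda>s. _ + s"] sum.cong refl summand)
  also have "\<dots> = bil (3*k+2) (gF k eps F P) v w"
    unfolding bil_gF bil_model_ip by (simp add: sum.distrib algebra_simps)
  finally show ?thesis .
qed

lemma wedge_frame:
  assumes "i \<in> {1..k}"
  shows "wedge 0 i (frame k eps F P v) (frame k eps F P w) = frame_scale F P i * wedge 0 i v w"
    "wedge i (2*k+1+i) (frame k eps F P v) (frame k eps F P w)
      = frame_scale F P i * frame_sign F P i
        * (wedge i (2*k+1+i) v w + frame_shear eps F P i * wedge 0 i v w)"
  unfolding wedge_def frame_simps(1) frame_simps(2,5)[OF assms] by (simp_all add: algebra_simps)

lemma quad4_curv_gF:
  "quad4 (3*k+2) (curv (gF k eps F) (3*k+2) P) v1 v2 v3 v4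
    = quad4 (3*k+2) (curvF k eps F P) v1 v2 v3 v4"
  by (rule quad4_cong_tensor) (rule curv_gF)

lemma quad4_frame:
  "quad4 (3*k+2) (model_R k)
      (frame k eps F P v1) (frame k eps F P v2) (frame k eps F P v3) (frame k eps F P v4)
    = quad4 (3*k+2) (curv (gF k eps F) (3*k+2) P) v1 v2 v3 v4"
  unfolding quad4_model_R quad4_curv_gF quad4_curvF
proof (intro sum.cong refl)
  fix i assume i: "i \<in> {1..k}"
  have c: "frame_scale F P i * frame_scale F P i * frame_sign F P i = 1 + deriv (F i) (P i)"
    using frame_scale_sign unfolding curv_coeff_def .
  have b: "2 * frame_shear eps F P i * (1 + deriv (F i) (P i)) = - (eps i * (F i (P i))\<^sup>2)"
    using frame_shear_coeff[OF i] unfolding curv_coeff_def .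
  have b': "eps i * (F i (P i))\<^sup>2
      = - (2 * frame_shear eps F P i * (frame_scale F P i * frame_scale F P i * frame_sign F P i))"
    unfolding c b by simp
  let ?\<Phi> = "frame k eps F P"
  show "wedge 0 i (?\<Phi> v1) (?\<Phi> v2) * wedge i (2*k+1+i) (?\<Phi> v3) (?\<Phi> v4)
      + wedge i (2*k+1+i) (?\<Phi> v1) (?\<Phi> v2) * wedge 0 i (?\<Phi> v3) (?\<Phi> v4)
    = (1 + deriv (F i) (P i))
        * (wedge 0 i v1 v2 * wedge i (2*k+1+i) v3 v4 + wedge i (2*k+1+i) v1 v2 * wedge 0 i v3 v4)
      - eps i * (F i (P i))\<^sup>2 * (wedge 0 i v1 v2 * wedge 0 i v3 v4)"
    unfolding wedge_frame[OF i] c[symmetric] b' by (simp add: algebra_simps)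
qed

end

sublocale gF_frame \<subseteq> model_frames "3*k+2" "model_ip k eps" "model_R k" "gF k eps F"
    "curv (gF k eps F) (3*k+2)" "frame k eps F" "frame_inv k eps F"
  by unfold_locales
    (rule linear_on_frame linear_on_frame_inv inverse_maps_on_frame bil_frame quad4_frame)+

lemma smooth_fun_has_deriv:
  "smooth_fun f \<Longrightarrow> ((deriv ^^ m) f has_real_derivative (deriv ^^ Suc m) f x) (at x)"
  unfolding smooth_fun_def by (simp add: DERIV_deriv_iff_real_differentiable)

theorem theorem1p4:
  fixes k :: nat and eps :: "nat \<Rightarrow> real" and F :: "nat \<Rightarrow> real \<Rightarrow> real"
  assumes "k \<ge> 1"
    and "\<forall>i\<in>{1..k}. eps i = 1 \<or> eps i = -1"
    and "\<forall>i\<in>{1..k}. smooth_fun (F i)"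
    and "\<forall>i\<in>{1..k}. \<forall>u. deriv (F i) u + 1 \<noteq> 0"
  shows
    \<comment> \<open>0-modeled: a linear isometry Phi_P onto the model with Phi_P^* R = R_P\<close>
    "(\<forall>P. \<exists>M. invertible_mat (3*k+2) M \<and>
        (\<forall>v w. bil (3*k+2) (model_ip k eps) (mv (3*k+2) M v) (mv (3*k+2) M w)
               = bil (3*k+2) (gF k eps F P) v w) \<and>
        (\<forall>v1 v2 v3 v4. quad4 (3*k+2) (model_R k)
               (mv (3*k+2) M v1) (mv (3*k+2) M v2) (mv (3*k+2) M v3) (mv (3*k+2) M v4)
             = quad4 (3*k+2) (curv (gF k eps F) (3*k+2) P) v1 v2 v3 v4))
   \<and> \<comment> \<open>equivalently: a normalized basis of every tangent space\<close>
     (\<forall>P. \<exists>Bv. lin_indep_basis (3*k+2) Bv \<and>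
        (\<forall>a<3*k+2. \<forall>b<3*k+2. bil (3*k+2) (gF k eps F P) (Bv a) (Bv b) = model_ip k eps a b) \<and>
        (\<forall>a<3*k+2. \<forall>b<3*k+2. \<forall>c<3*k+2. \<forall>d<3*k+2.
            quad4 (3*k+2) (curv (gF k eps F) (3*k+2) P) (Bv a) (Bv b) (Bv c) (Bv d)
              = model_R k a b c d))
   \<and> \<comment> \<open>in particular 0-curvature homogeneous\<close>
     (\<forall>P Q. \<exists>M. invertible_mat (3*k+2) M \<and>
        (\<forall>v w. bil (3*k+2) (gF k eps F Q) (mv (3*k+2) M v) (mv (3*k+2) M w)
               = bil (3*k+2) (gF k eps F P) v w) \<and>
        (\<forall>v1 v2 v3 v4. quad4 (3*k+2) (curv (gF k eps F) (3*k+2) Q)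
               (mv (3*k+2) M v1) (mv (3*k+2) M v2) (mv (3*k+2) M v3) (mv (3*k+2) M v4)
             = quad4 (3*k+2) (curv (gF k eps F) (3*k+2) P) v1 v2 v3 v4))"
proof -
  interpret gF_frame k eps F
  proof
    fix i u assume i: "i \<in> {1..k}"
    show "(F i has_real_derivative deriv (F i) u) (at u)"
      using smooth_fun_has_deriv[of "F i" 0] assms(3) i by simp
    show "(deriv (F i) has_real_derivative deriv (deriv (F i)) u) (at u)"
      using smooth_fun_has_deriv[of "F i" 1] assms(3) i by simp
    have "eps i = 1 \<or> eps i = -1"
      using assms(2) i by blast
    then show "eps i * eps i = 1"
      by auto
    show "deriv (F i) u + 1 \<noteq> 0"
      using assms(4) i by blast
  qed
  show ?thesis
    using zero_modeled normalized_basis curvature_homogeneous by blast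
qed

end
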